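(* Let $Q$ be a groupoid quantale with base locale $A$ and let $X$ be a stably supported $Q$-module with support $\varsigma_X$ and inner product $\langle-,-\rangle$. Then for all $x\in X$ and $q\in Q$, $$\varsigma_X(x)\triangleright q=\langle x,x\rangle1_Q\wedge q.$$
   Context: Let $A$ be a locale. An involutive $A$-$A$-quantale $Q$ is a sup-lattice with unital left and right $A$-actions $a\triangleright q$, $q\triangleleft a$ commuting with each other, an associative join-preserving multiplication with $(a\triangleright x)y=a\triangleright(xy)$, $(x\triangleleft a)y=x(a\triangleright y)$, $(xy)\triangleleft a=x(y\triangleleft a)$, and a join-preserving involution with $x^{**}=x$, $(xy)^*=y^*x^*$, $(a\triangleright x\triangleleft b)^*=b\triangleright x^*\triangleleft a$. A support is a sup-lattice homomorphism $\varsigma_Q:Q\to A$ with $\varsigma_Q(1_Q)=1_A$, $\varsigma_Q(x)\triangleright y\le xx^*y$, $\varsigma_Q(x)\triangleright x=x$; equivariant if $\varsigma_Q(a\triangleright x)=a\wedge\varsigma_Q(x)$. A groupoid quantale is such a $Q$ which is a frame with $(a\triangleright q)\wedge m=a\triangleright(q\wedge m)$, $m\wedge(q\triangleleft a)=(q\wedge m)\triangleleft a$, equipped with an equivariant support and a frame homomorphism $\upsilon:Q\to A$ with $\upsilon(a\triangleright1_Q)=a=\upsilon(1_Q\triangleleft a)$, such that the right adjoint of the multiplication $Q\otimes_AQ\to Q$ preserves joins, and satisfying $\bigvee_{xy\le a}\upsilon(x)\triangleright y=a$ and $\upsilon(a)\triangleright1_Q=\bigvee_{xx^*\le a}x$.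 A $Q$-module is a locale $X$ with a left $Q$-module action $q\cdot x$ and unital left $A$-module structure $a\triangleright x$ with $(a\triangleright q)\cdot x=a\triangleright(q\cdot x)$, $(q\triangleleft a)\cdot x=q\cdot(a\triangleright x)$, $a\triangleright(x\wedge y)=(a\triangleright x)\wedge y$. A pre-Hilbert $Q$-module has $\langle-,-\rangle:X\times X\to Q$ with $\langle q\cdot x,y\rangle=q\langle x,y\rangle$, $a\triangleright\langle x,1_X\rangle=\langle a\triangleright x,1_X\rangle$, $\langle\bigvee x_\alpha,y\rangle=\bigvee\langle x_\alpha,y\rangle$, $\langle x,y\rangle=\langle y,x\rangle^*$. It is supported if equipped with a monotone $\varsigma_X:X\to A$ with $\varsigma_X(1_X)=1_A$, $\varsigma_X(x)\triangleright1_X\le\langle x,x\rangle\cdot1_X$, $\varsigma_X(x)\triangleright x=x$; stably supported if moreover $\varsigma_X(q\cdot x)\le\varsigma_Q(q)$. *)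

theory Defs
  imports Main
begin

unbundle lattice_syntax

text \<open>Conventions: locales and sup-lattices are complete lattices; 1 of a lattice is its top.\<close>

definition frame_law :: "'a::complete_lattice itself \<Rightarrow> bool" where
  "frame_law _ \<longleftrightarrow> (\<forall>(a::'a) S. a \<sqinter> Sup S = (SUP b\<in>S. a \<sqinter> b))"

definition sup_hom :: "('a::complete_lattice \<Rightarrow> 'b::complete_lattice) \<Rightarrow> bool" where
  "sup_hom f \<longleftrightarrow> (\<forall>S. f (Sup S) = (SUP s\<in>S. f s))"

definition frame_hom :: "('a::complete_lattice \<Rightarrow> 'b::complete_lattice) \<Rightarrow> bool" where
  "frame_hom f \<longleftrightarrow> sup_hom f \<and> f top = top \<and> (\<forall>x y. f (x \<sqinter> y) = f x \<sqinter> f y)"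

definition left_A_module :: "('a::complete_lattice \<Rightarrow> 'm::complete_lattice \<Rightarrow> 'm) \<Rightarrow> bool" where
  "left_A_module act \<longleftrightarrow>
     (\<forall>S m. act (Sup S) m = (SUP a\<in>S. act a m)) \<and>
     (\<forall>a M. act a (Sup M) = (SUP m\<in>M. act a m)) \<and>
     (\<forall>a b m. act (a \<sqinter> b) m = act a (act b m)) \<and>
     (\<forall>m. act top m = m)"

definition right_A_module :: "('m::complete_lattice \<Rightarrow> 'a::complete_lattice \<Rightarrow> 'm) \<Rightarrow> bool" where
  "right_A_module act \<longleftrightarrow>
     (\<forall>S m. act m (Sup S) = (SUP a\<in>S. act m a)) \<and>
     (\<forall>a M. act (Sup M) a = (SUP m\<in>M. act m a)) \<and>
     (\<forall>a b m. act m (a \<sqinter> b) = act (act m a) b) \<and>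
     (\<forall>m. act m top = m)"

definition involutive_AA_quantale ::
  "('a::complete_lattice \<Rightarrow> 'q::complete_lattice \<Rightarrow> 'q) \<Rightarrow> ('q \<Rightarrow> 'a \<Rightarrow> 'q) \<Rightarrow>
   ('q \<Rightarrow> 'q \<Rightarrow> 'q) \<Rightarrow> ('q \<Rightarrow> 'q) \<Rightarrow> bool" where
  "involutive_AA_quantale lact ract mult invol \<longleftrightarrow>
     frame_law TYPE('a) \<and>
     left_A_module lact \<and> right_A_module ract \<and>
     (\<forall>a b q. ract (lact a q) b = lact a (ract q b)) \<and>
     (\<forall>x y z. mult (mult x y) z = mult x (mult y z)) \<and>
     (\<forall>X y. mult (Sup X) y = (SUP x\<in>X. mult x y)) \<and>
     (\<forall>x Y. mult x (Sup Y) = (SUP y\<in>Y. mult x y)) \<and>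
     (\<forall>a x y. mult (lact a x) y = lact a (mult x y)) \<and>
     (\<forall>a x y. mult (ract x a) y = mult x (lact a y)) \<and>
     (\<forall>a x y. ract (mult x y) a = mult x (ract y a)) \<and>
     sup_hom invol \<and>
     (\<forall>x. invol (invol x) = x) \<and>
     (\<forall>x y. invol (mult x y) = mult (invol y) (invol x)) \<and>
     (\<forall>a b x. invol (ract (lact a x) b) = ract (lact b (invol x)) a)"

definition is_support ::
  "('a::complete_lattice \<Rightarrow> 'q::complete_lattice \<Rightarrow> 'q) \<Rightarrow> ('q \<Rightarrow> 'q \<Rightarrow> 'q) \<Rightarrow> ('q \<Rightarrow> 'q) \<Rightarrow>
   ('q \<Rightarrow> 'a) \<Rightarrow> bool" where
  "is_support lact mult invol supp \<longleftrightarrow>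
     sup_hom supp \<and> supp top = top \<and>
     (\<forall>x y. lact (supp x) y \<le> mult (mult x (invol x)) y) \<and>
     (\<forall>x. lact (supp x) x = x)"

definition equivariant_support ::
  "('a::complete_lattice \<Rightarrow> 'q::complete_lattice \<Rightarrow> 'q) \<Rightarrow> ('q \<Rightarrow> 'a) \<Rightarrow> bool" where
  "equivariant_support lact supp \<longleftrightarrow> (\<forall>a x. supp (lact a x) = a \<sqinter> supp x)"

text \<open>The tensor product Q \<otimes>_A Q represented (Joyal--Tierney) as the sup-lattice of
  A-balanced tensor ideals of Q \<times> Q, ordered by inclusion.\<close>
definition tensor_ideal ::
  "('a::complete_lattice \<Rightarrow> 'q::complete_lattice \<Rightarrow> 'q) \<Rightarrow> ('q \<Rightarrow> 'a \<Rightarrow> 'q) \<Rightarrow> ('q \<times> 'q) set \<Rightarrow> bool" where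
  "tensor_ideal lact ract C \<longleftrightarrow>
     (\<forall>x y x' y'. (x, y) \<in> C \<and> x' \<le> x \<and> y' \<le> y \<longrightarrow> (x', y') \<in> C) \<and>
     (\<forall>S y. (\<forall>s\<in>S. (s, y) \<in> C) \<longrightarrow> (Sup S, y) \<in> C) \<and>
     (\<forall>x S. (\<forall>s\<in>S. (x, s) \<in> C) \<longrightarrow> (x, Sup S) \<in> C) \<and>
     (\<forall>x a y. (ract x a, y) \<in> C \<longleftrightarrow> (x, lact a y) \<in> C)"

definition tensor_join ::
  "('a::complete_lattice \<Rightarrow> 'q::complete_lattice \<Rightarrow> 'q) \<Rightarrow> ('q \<Rightarrow> 'a \<Rightarrow> 'q) \<Rightarrow>
   ('q \<times> 'q) set set \<Rightarrow> ('q \<times> 'q) set" where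
  "tensor_join lact ract \<C> = \<Inter>{C. tensor_ideal lact ract C \<and> \<Union>\<C> \<subseteq> C}"

text \<open>Right adjoint of the multiplication Q \<otimes>_A Q \<rightarrow> Q.\<close>
definition mult_radj :: "('q::complete_lattice \<Rightarrow> 'q \<Rightarrow> 'q) \<Rightarrow> 'q \<Rightarrow> ('q \<times> 'q) set" where
  "mult_radj mult z = {(x, y). mult x y \<le> z}"

definition groupoid_quantale ::
  "('a::complete_lattice \<Rightarrow> 'q::complete_lattice \<Rightarrow> 'q) \<Rightarrow> ('q \<Rightarrow> 'a \<Rightarrow> 'q) \<Rightarrow>
   ('q \<Rightarrow> 'q \<Rightarrow> 'q) \<Rightarrow> ('q \<Rightarrow> 'q) \<Rightarrow> ('q \<Rightarrow> 'a) \<Rightarrow> ('q \<Rightarrow> 'a) \<Rightarrow> bool" where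
  "groupoid_quantale lact ract mult invol supp ups \<longleftrightarrow>
     involutive_AA_quantale lact ract mult invol \<and>
     frame_law TYPE('q) \<and>
     (\<forall>a q m. lact a q \<sqinter> m = lact a (q \<sqinter> m)) \<and>
     (\<forall>a q m. m \<sqinter> ract q a = ract (q \<sqinter> m) a) \<and>
     is_support lact mult invol supp \<and> equivariant_support lact supp \<and>
     frame_hom ups \<and>
     (\<forall>a. ups (lact a top) = a \<and> ups (ract top a) = a) \<and>
     (\<forall>Z. mult_radj mult (Sup Z) = tensor_join lact ract (mult_radj mult ` Z)) \<and>
     (\<forall>a. (SUP (x, y)\<in>{(x, y). mult x y \<le> a}. lact (ups x) y) = a) \<and>
     (\<forall>a. lact (ups a) top = Sup {x. mult x (invol x) \<le> a})"

definition Q_module ::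
  "('a::complete_lattice \<Rightarrow> 'q::complete_lattice \<Rightarrow> 'q) \<Rightarrow> ('q \<Rightarrow> 'a \<Rightarrow> 'q) \<Rightarrow> ('q \<Rightarrow> 'q \<Rightarrow> 'q) \<Rightarrow>
   ('q \<Rightarrow> 'x::complete_lattice \<Rightarrow> 'x) \<Rightarrow> ('a \<Rightarrow> 'x \<Rightarrow> 'x) \<Rightarrow> bool" where
  "Q_module lact ract mult act aact \<longleftrightarrow>
     frame_law TYPE('x) \<and>
     (\<forall>p q x. act (mult p q) x = act p (act q x)) \<and>
     (\<forall>Q x. act (Sup Q) x = (SUP q\<in>Q. act q x)) \<and>
     (\<forall>q X. act q (Sup X) = (SUP x\<in>X. act q x)) \<and>
     left_A_module aact \<and>
     (\<forall>a q x. act (lact a q) x = aact a (act q x)) \<and>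
     (\<forall>a q x. act (ract q a) x = act q (aact a x)) \<and>
     (\<forall>a x y. aact a (x \<sqinter> y) = aact a x \<sqinter> y)"

definition pre_Hilbert ::
  "('a::complete_lattice \<Rightarrow> 'q::complete_lattice \<Rightarrow> 'q) \<Rightarrow> ('q \<Rightarrow> 'q \<Rightarrow> 'q) \<Rightarrow> ('q \<Rightarrow> 'q) \<Rightarrow>
   ('q \<Rightarrow> 'x::complete_lattice \<Rightarrow> 'x) \<Rightarrow> ('a \<Rightarrow> 'x \<Rightarrow> 'x) \<Rightarrow> ('x \<Rightarrow> 'x \<Rightarrow> 'q) \<Rightarrow> bool" where
  "pre_Hilbert lact mult invol act aact ip \<longleftrightarrow>
     (\<forall>q x y. ip (act q x) y = mult q (ip x y)) \<and>
     (\<forall>a x. lact a (ip x top) = ip (aact a x) top) \<and>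
     (\<forall>X y. ip (Sup X) y = (SUP x\<in>X. ip x y)) \<and>
     (\<forall>x y. ip x y = invol (ip y x))"

definition supported_module ::
  "('q::complete_lattice \<Rightarrow> 'x::complete_lattice \<Rightarrow> 'x) \<Rightarrow> ('a::complete_lattice \<Rightarrow> 'x \<Rightarrow> 'x) \<Rightarrow>
   ('x \<Rightarrow> 'x \<Rightarrow> 'q) \<Rightarrow> ('x \<Rightarrow> 'a) \<Rightarrow> bool" where
  "supported_module act aact ip suppX \<longleftrightarrow>
     mono suppX \<and> suppX top = top \<and>
     (\<forall>x. aact (suppX x) top \<le> act (ip x x) top) \<and>
     (\<forall>x. aact (suppX x) x = x)"

definition stably_supported_module ::
  "('a::complete_lattice \<Rightarrow> 'q::complete_lattice \<Rightarrow> 'q) \<Rightarrow> ('q \<Rightarrow> 'a \<Rightarrow> 'q) \<Rightarrow>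
   ('q \<Rightarrow> 'q \<Rightarrow> 'q) \<Rightarrow> ('q \<Rightarrow> 'q) \<Rightarrow> ('q \<Rightarrow> 'a) \<Rightarrow>
   ('q \<Rightarrow> 'x::complete_lattice \<Rightarrow> 'x) \<Rightarrow> ('a \<Rightarrow> 'x \<Rightarrow> 'x) \<Rightarrow> ('x \<Rightarrow> 'x \<Rightarrow> 'q) \<Rightarrow> ('x \<Rightarrow> 'a) \<Rightarrow> bool" where
  "stably_supported_module lact ract mult invol supp act aact ip suppX \<longleftrightarrow>
     Q_module lact ract mult act aact \<and>
     pre_Hilbert lact mult invol act aact ip \<and>
     supported_module act aact ip suppX \<and>
     (\<forall>q x. suppX (act q x) \<le> supp q)"

end

theory Submission
  imports Defs
begin

text \<open>Both inclusions between \<open>\<varsigma>\<^sub>X(x) \<triangleright> 1\<close> and \<open>\<langle>x,x\<rangle>1\<close> come from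
  \<open>\<varsigma>\<^sub>X(x) \<triangleright> x = x\<close>. Inside the inner product it gives
  \<open>\<langle>x,x\<rangle> \<le> \<varsigma>\<^sub>X(x) \<triangleright> \<langle>x,1\<rangle>\<close>, hence \<open>\<langle>x,x\<rangle>1 \<le> \<varsigma>\<^sub>X(x) \<triangleright> 1\<close>. In \<open>X\<close> it gives
  \<open>x \<le> \<varsigma>\<^sub>X(x) \<triangleright> 1 \<le> \<langle>x,x\<rangle>\<cdot>1\<close>, so stability yields \<open>\<varsigma>\<^sub>X(x) \<le> \<varsigma>\<^sub>Q\<langle>x,x\<rangle>\<close>, and the
  support axiom of \<open>Q\<close> gives \<open>\<varsigma>\<^sub>Q\<langle>x,x\<rangle> \<triangleright> 1 \<le> \<langle>x,x\<rangle>\<langle>x,x\<rangle>\<^sup>*1 \<le> \<langle>x,x\<rangle>1\<close>.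
  Finally, in a groupoid quantale \<open>a \<triangleright> q = (a \<triangleright> 1) \<sqinter> q\<close>.\<close>

lemma sup_hom_mono:
  assumes "sup_hom f"
  shows "mono f"
proof
  fix a b :: 'a
  assume "a \<le> b"
  then have "f b = f (Sup {a, b})" by (simp add: sup_absorb2)
  also have "\<dots> = sup (f a) (f b)"
    using assms[unfolded sup_hom_def, rule_format, of "{a, b}"] by simp
  finally show "f a \<le> f b" by (simp add: le_iff_sup)
qed

lemma left_A_module_mono:
  assumes "left_A_module act" and "a \<le> b" and "m \<le> n"
  shows "act a m \<le> act b n"
proof -
  have "mono (\<lambda>a. act a m)" and "mono (act b)"
    using assms(1) by (auto intro!: sup_hom_mono simp: sup_hom_def left_A_module_def)
  then show ?thesis using assms(2,3) by (meson monoD order_trans)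
qed

lemma involutive_AA_quantale_mult_mono:
  assumes "involutive_AA_quantale lact ract mult invol" and "x \<le> x'" and "y \<le> y'"
  shows "mult x y \<le> mult x' y'"
proof -
  have "mono (\<lambda>x. mult x y)" and "mono (mult x')"
    using assms(1) by (auto intro!: sup_hom_mono simp: sup_hom_def involutive_AA_quantale_def)
  then show ?thesis using assms(2,3) by (meson monoD order_trans)
qed

lemma involutive_AA_quantale_invol_mono:
  assumes "involutive_AA_quantale lact ract mult invol"
  shows "mono invol"
  using assms by (simp add: sup_hom_mono involutive_AA_quantale_def)

lemma pre_Hilbert_ip_mono:
  assumes "pre_Hilbert lact mult invol act aact ip" and "mono invol"
    and "x \<le> x'" and "y \<le> y'"
  shows "ip x y \<le> ip x' y'"
proof -
  have ip_Sup: "\<forall>X y. ip (Sup X) y = (SUP x\<in>X. ip x y)"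
    and ip_sym: "\<forall>x y. ip x y = invol (ip y x)"
    using assms(1) unfolding pre_Hilbert_def by blast+
  have ip_left: "mono (\<lambda>x. ip x z)" for z
    using ip_Sup by (auto intro!: sup_hom_mono simp: sup_hom_def)
  have "ip x y = invol (ip y x)" by (rule ip_sym[rule_format])
  also have "\<dots> \<le> invol (ip y' x)"
    using ip_left[THEN monoD, OF assms(4)] by (rule monoD[OF assms(2)])
  also have "\<dots> = ip x y'" by (rule ip_sym[rule_format, symmetric])
  also have "\<dots> \<le> ip x' y'" using ip_left[THEN monoD, OF assms(3)] .
  finally show ?thesis .
qed

lemma lact_eq_inf_lact_top:
  fixes lact :: "'a \<Rightarrow> 'q::bounded_lattice_top \<Rightarrow> 'q"
  assumes "\<forall>a q m. lact a q \<sqinter> m = lact a (q \<sqinter> m)"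
  shows "lact a q = lact a top \<sqinter> q"
  using assms[rule_format, of a top q] by simp

lemma suppX_lact_top_le_mult_ip_top:
  assumes Q: "involutive_AA_quantale lact ract mult invol"
    and supp: "is_support lact mult invol supp"
    and X: "stably_supported_module lact ract mult invol supp act aact ip suppX"
  shows "lact (suppX x) top \<le> mult (ip x x) top"
proof -
  let ?p = "ip x x"
  have module: "Q_module lact ract mult act aact"
    and supported: "supported_module act aact ip suppX"
    and stable: "\<forall>q x. suppX (act q x) \<le> supp q"
    using X unfolding stably_supported_module_def by blast+
  have lact: "left_A_module lact" and aact: "left_A_module aact"
    using Q module unfolding involutive_AA_quantale_def Q_module_def by blast+
  have "x = aact (suppX x) x" using supported by (simp add: supported_module_def)
  also have "\<dots> \<le> aact (suppX x) top" using aact by (simp add: left_A_module_mono)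
  also have "\<dots> \<le> act ?p top" using supported by (simp add: supported_module_def)
  finally have "suppX x \<le> suppX (act ?p top)"
    using supported by (simp add: supported_module_def monoD)
  also have "\<dots> \<le> supp ?p" using stable by blast
  finally have "lact (suppX x) top \<le> lact (supp ?p) top"
    using lact by (simp add: left_A_module_mono)
  also have "\<dots> \<le> mult (mult ?p (invol ?p)) top" using supp by (simp add: is_support_def)
  also have "\<dots> = mult ?p (mult (invol ?p) top)"
    using Q by (simp add: involutive_AA_quantale_def)
  also have "\<dots> \<le> mult ?p top" using Q by (simp add: involutive_AA_quantale_mult_mono)
  finally show ?thesis .
qed

lemma mult_ip_top_le_suppX_lact_top:
  assumes Q: "involutive_AA_quantale lact ract mult invol"
    and H: "pre_Hilbert lact mult invol act aact ip"
    and supported: "supported_module act aact ip suppX"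
  shows "mult (ip x x) top \<le> lact (suppX x) top"
proof -
  let ?s = "suppX x"
  have lact: "left_A_module lact"
    and mult_lact: "\<forall>a x y. mult (lact a x) y = lact a (mult x y)"
    using Q unfolding involutive_AA_quantale_def by blast+
  have ip_lact: "\<forall>a x. lact a (ip x top) = ip (aact a x) top"
    using H unfolding pre_Hilbert_def by blast
  have "ip x x = ip (aact ?s x) x" using supported by (simp add: supported_module_def)
  also have "\<dots> \<le> ip (aact ?s x) top"
    using H Q by (simp add: pre_Hilbert_ip_mono involutive_AA_quantale_invol_mono)
  also have "\<dots> = lact ?s (ip x top)" using ip_lact by simp
  finally have "mult (ip x x) top \<le> mult (lact ?s (ip x top)) top"
    using Q by (simp add: involutive_AA_quantale_mult_mono)
  also have "\<dots> = lact ?s (mult (ip x top) top)" using mult_lact by simp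
  also have "\<dots> \<le> lact ?s top" using lact by (simp add: left_A_module_mono)
  finally show ?thesis .
qed

lemma suppX_lact_top_eq_mult_ip_top:
  assumes Q: "involutive_AA_quantale lact ract mult invol"
    and supp: "is_support lact mult invol supp"
    and X: "stably_supported_module lact ract mult invol supp act aact ip suppX"
  shows "lact (suppX x) top = mult (ip x x) top"
proof (rule order_antisym)
  show "lact (suppX x) top \<le> mult (ip x x) top"
    using Q supp X by (rule suppX_lact_top_le_mult_ip_top)
  have "pre_Hilbert lact mult invol act aact ip" and "supported_module act aact ip suppX"
    using X unfolding stably_supported_module_def by blast+
  with Q show "mult (ip x x) top \<le> lact (suppX x) top"
    by (rule mult_ip_top_le_suppX_lact_top)
qed

theorem corollary4p2:
  fixes lact :: "'a::complete_lattice \<Rightarrow> 'q::complete_lattice \<Rightarrow> 'q"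
    and ract :: "'q \<Rightarrow> 'a \<Rightarrow> 'q"
    and mult :: "'q \<Rightarrow> 'q \<Rightarrow> 'q"
    and invol :: "'q \<Rightarrow> 'q"
    and supp :: "'q \<Rightarrow> 'a"
    and ups :: "'q \<Rightarrow> 'a"
    and act :: "'q \<Rightarrow> 'x::complete_lattice \<Rightarrow> 'x"
    and aact :: "'a \<Rightarrow> 'x \<Rightarrow> 'x"
    and ip :: "'x \<Rightarrow> 'x \<Rightarrow> 'q"
    and suppX :: "'x \<Rightarrow> 'a"
  assumes "groupoid_quantale lact ract mult invol supp ups"
    and "stably_supported_module lact ract mult invol supp act aact ip suppX"
  shows "\<forall>x q. lact (suppX x) q = inf (mult (ip x x) top) q"
proof (intro allI)
  fix x q
  have Q: "involutive_AA_quantale lact ract mult invol"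
    and meet: "\<forall>a q m. lact a q \<sqinter> m = lact a (q \<sqinter> m)"
    and supp: "is_support lact mult invol supp"
    using assms(1) unfolding groupoid_quantale_def by blast+
  have "lact (suppX x) q = lact (suppX x) top \<sqinter> q"
    using meet by (rule lact_eq_inf_lact_top)
  also have "lact (suppX x) top = mult (ip x x) top"
    using Q supp assms(2) by (rule suppX_lact_top_eq_mult_ip_top)
  finally show "lact (suppX x) q = inf (mult (ip x x) top) q" .
qed

end
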